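(* Let $G$ be an upward planar digraph with a fixed upward planar embedding and let $(s_1,t_1),\dots,(s_k,t_k)$ be pairs of vertices. Let $\mathcal{P}$ be a set of pairwise disjoint directed paths connecting $(s_i,t_i)$ for all $i$. Let $P\in\mathcal{P}$ be the path connecting $s_i$ and $t_i$, for some $i$, and suppose $P$ is maximal with respect to $\prec^*_{\mathcal{P}}$. Let $P'$ be the right-most $s_i$-$t_i$ path in $G$. Then $(\mathcal{P}\setminus\{P\})\cup\{P'\}$ is also a valid solution to the disjoint paths problem on $G$ and $(s_1,t_1),\dots,(s_k,t_k)$, i.e. it is a set of pairwise disjoint paths linking $s_j$ to $t_j$ for every $j$.
   Context: An upward planar embedding of a digraph is a plane drawing (no edge crossings) in which every directed edge is a curve monotone increasing in the $y$-direction from tail to head. A path is identified with the set of points of $\mathbb{R}^2$ in its drawing. For a path $P$ with endpoints $(x,y)$, $(x',y')$, $y\le y'$, let $\mathrm{Right}(P):=\{(u,v)\in\mathbb{R}^2: y\le v\le y',\ u'<u \text{ for all } u' \text{ with } (u',v)\in P\}$. A point $p\notin P$ is to the right of $P$ if $p\in\mathrm{Right}(P)$. For disjoint paths $P,Q$, write $Q\prec P$ if some point of $P$ is to the right of $Q$; $\prec^*_{\mathcal{P}}$ is the transitive closure of $\prec$ restricted to the paths in $\mathcal{P}$ (a partial order). A right-most $s$-$t$ path is a directed $s$-$t$ path $P$ such that for all directed $s$-$t$ paths $P'$, $P\subseteq P'\cup\mathrm{Right}(P')$. *)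

theory Defs
  imports "HOL-Analysis.Analysis"
begin

definition upward_planar_embedding ::
  "'v set \<Rightarrow> ('v \<times> 'v) set \<Rightarrow> ('v \<Rightarrow> real \<times> real) \<Rightarrow> ('v \<times> 'v \<Rightarrow> real \<Rightarrow> real \<times> real) \<Rightarrow> bool"
where
  "upward_planar_embedding V E pos c \<longleftrightarrow>
     finite V \<and> E \<subseteq> V \<times> V \<and> inj_on pos V \<and>
     (\<forall>e\<in>E. arc (c e) \<and> pathstart (c e) = pos (fst e) \<and> pathfinish (c e) = pos (snd e) \<and>
        (\<forall>a b. 0 \<le> a \<and> a < b \<and> b \<le> 1 \<longrightarrow> snd (c e a) < snd (c e b))) \<and>
     (\<forall>e\<in>E. \<forall>v\<in>V. pos v \<in> path_image (c e) \<longrightarrow> v = fst e \<or> v = snd e) \<and>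
     (\<forall>e\<in>E. \<forall>e'\<in>E. e \<noteq> e' \<longrightarrow>
        path_image (c e) \<inter> path_image (c e') \<subseteq> pos ` ({fst e, snd e} \<inter> {fst e', snd e'}))"

definition dpath :: "'v set \<Rightarrow> ('v \<times> 'v) set \<Rightarrow> 'v list \<Rightarrow> 'v \<Rightarrow> 'v \<Rightarrow> bool" where
  "dpath V E vs s t \<longleftrightarrow> vs \<noteq> [] \<and> hd vs = s \<and> last vs = t \<and> distinct vs \<and> set vs \<subseteq> V \<and>
     (\<forall>j. Suc j < length vs \<longrightarrow> (vs ! j, vs ! Suc j) \<in> E)"

definition pts :: "('v \<Rightarrow> real \<times> real) \<Rightarrow> ('v \<times> 'v \<Rightarrow> real \<Rightarrow> real \<times> real) \<Rightarrow> 'v list \<Rightarrow> (real \<times> real) set" where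
  "pts pos c vs = pos ` set vs \<union> (\<Union>j\<in>{j. Suc j < length vs}. path_image (c (vs ! j, vs ! Suc j)))"

definition Right :: "('v \<Rightarrow> real \<times> real) \<Rightarrow> ('v \<times> 'v \<Rightarrow> real \<Rightarrow> real \<times> real) \<Rightarrow> 'v list \<Rightarrow> (real \<times> real) set" where
  "Right pos c vs =
     (let y = min (snd (pos (hd vs))) (snd (pos (last vs)));
          y' = max (snd (pos (hd vs))) (snd (pos (last vs)))
      in {(u, v). y \<le> v \<and> v \<le> y' \<and> (\<forall>u'. (u', v) \<in> pts pos c vs \<longrightarrow> u' < u)})"

definition prec :: "('v \<Rightarrow> real \<times> real) \<Rightarrow> ('v \<times> 'v \<Rightarrow> real \<Rightarrow> real \<times> real) \<Rightarrow> 'v list \<Rightarrow> 'v list \<Rightarrow> bool" where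
  "prec pos c Q P \<longleftrightarrow> pts pos c Q \<inter> pts pos c P = {} \<and>
     (\<exists>p\<in>pts pos c P. p \<notin> pts pos c Q \<and> p \<in> Right pos c Q)"

definition rightmost_path ::
  "'v set \<Rightarrow> ('v \<times> 'v) set \<Rightarrow> ('v \<Rightarrow> real \<times> real) \<Rightarrow> ('v \<times> 'v \<Rightarrow> real \<Rightarrow> real \<times> real) \<Rightarrow> 'v \<Rightarrow> 'v \<Rightarrow> 'v list \<Rightarrow> bool"
where
  "rightmost_path V E pos c s t P \<longleftrightarrow> dpath V E P s t \<and>
     (\<forall>P'. dpath V E P' s t \<longrightarrow> pts pos c P \<subseteq> pts pos c P' \<union> Right pos c P')"

definition disjoint_paths_solution ::
  "'v set \<Rightarrow> ('v \<times> 'v) set \<Rightarrow> ('v \<Rightarrow> real \<times> real) \<Rightarrow> ('v \<times> 'v \<Rightarrow> real \<Rightarrow> real \<times> real) \<Rightarrow>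
   nat \<Rightarrow> (nat \<Rightarrow> 'v) \<Rightarrow> (nat \<Rightarrow> 'v) \<Rightarrow> (nat \<Rightarrow> 'v list) \<Rightarrow> bool"
where
  "disjoint_paths_solution V E pos c k s t p \<longleftrightarrow>
     (\<forall>j<k. dpath V E (p j) (s j) (t j)) \<and>
     (\<forall>j<k. \<forall>l<k. j \<noteq> l \<longrightarrow> pts pos c (p j) \<inter> pts pos c (p l) = {})"

text \<open>The transitive closure of \<prec> restricted to the solution, as a relation on indices
(distinct indices carry distinct, disjoint paths).\<close>
definition prec_star :: "('v \<Rightarrow> real \<times> real) \<Rightarrow> ('v \<times> 'v \<Rightarrow> real \<Rightarrow> real \<times> real) \<Rightarrow>
   nat \<Rightarrow> (nat \<Rightarrow> 'v list) \<Rightarrow> (nat \<times> nat) set" where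
  "prec_star pos c k p = {(a, b). a < k \<and> b < k \<and> prec pos c (p a) (p b)}\<^sup>+"

end

theory Submission
  imports Defs
begin

text \<open>Every point of the right-most path P' lies on P or to the right of P. A point of P' on
another solution path Q is not on P (the paths are disjoint), so it lies to the right of P,
i.e. P \<prec> Q, contradicting the maximality of P. Hence P' avoids all other paths.\<close>

lemma prec_if_point_right:
  assumes "pts pos c Q \<inter> pts pos c P = {}"
    and "x \<in> pts pos c P" and "x \<in> Right pos c Q"
  shows "prec pos c Q P"
  using assms unfolding prec_def by blast

lemma rightmost_path_disjoint_if_not_prec:
  assumes rm: "rightmost_path V E pos c s t P'"
    and P: "dpath V E P s t"
    and disj: "pts pos c P \<inter> pts pos c Q = {}"
    and not_prec: "\<not> prec pos c P Q"
  shows "pts pos c P' \<inter> pts pos c Q = {}"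
proof (rule ccontr)
  assume "pts pos c P' \<inter> pts pos c Q \<noteq> {}"
  then obtain x where x: "x \<in> pts pos c P'" "x \<in> pts pos c Q" by blast
  have "pts pos c P' \<subseteq> pts pos c P \<union> Right pos c P"
    using rm P unfolding rightmost_path_def by blast
  with x disj have "x \<in> Right pos c P" by blast
  with disj x(2) have "prec pos c P Q" by (rule prec_if_point_right)
  with not_prec show False ..
qed

lemma prec_in_prec_star:
  assumes "a < k" "b < k" "prec pos c (p a) (p b)"
  shows "(a, b) \<in> prec_star pos c k p"
  using assms unfolding prec_star_def by auto

lemma disjoint_paths_solution_update:
  assumes sol: "disjoint_paths_solution V E pos c k s t p"
    and P': "dpath V E P' (s i) (t i)"
    and disj: "\<And>j. j < k \<Longrightarrow> j \<noteq> i \<Longrightarrow> pts pos c P' \<inter> pts pos c (p j) = {}"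
  shows "disjoint_paths_solution V E pos c k s t (p(i := P'))"
  using assms unfolding disjoint_paths_solution_def by (auto simp: Int_commute)

theorem lemma11:
  fixes V :: "'v set" and E :: "('v \<times> 'v) set"
    and pos :: "'v \<Rightarrow> real \<times> real" and c :: "'v \<times> 'v \<Rightarrow> real \<Rightarrow> real \<times> real"
    and k :: nat and s t :: "nat \<Rightarrow> 'v" and p :: "nat \<Rightarrow> 'v list"
    and i :: nat and P' :: "'v list"
  assumes emb: "upward_planar_embedding V E pos c"
    and sol: "disjoint_paths_solution V E pos c k s t p"
    and i: "i < k"
    and maximal: "\<not> (\<exists>j<k. (i, j) \<in> prec_star pos c k p)"
    and rm: "rightmost_path V E pos c (s i) (t i) P'"
  shows "disjoint_paths_solution V E pos c k s t (p(i := P'))"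
proof (rule disjoint_paths_solution_update[OF sol])
  show "dpath V E P' (s i) (t i)"
    using rm unfolding rightmost_path_def by blast
next
  fix j assume j: "j < k" "j \<noteq> i"
  have "dpath V E (p i) (s i) (t i)" and "pts pos c (p i) \<inter> pts pos c (p j) = {}"
    using sol i j unfolding disjoint_paths_solution_def by auto
  moreover have "\<not> prec pos c (p i) (p j)"
    using maximal prec_in_prec_star[OF i \<open>j < k\<close>] j by blast
  ultimately show "pts pos c P' \<inter> pts pos c (p j) = {}"
    using rightmost_path_disjoint_if_not_prec[OF rm] by blast
qed

end
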